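(* For arbitrary positive integers $m$ and $n$, there exist a finite alphabet $A$, a letter $a\in A$, and languages $K,L\subseteq A^*$ with syntactic monoids $M$ and $N$ satisfying $|M|=m$, $|N|=n$, such that the syntactic monoid of the language $KaL=\{\,uav\mid u\in K,\ v\in L\,\}$ has exactly $mn(2^{mn}-1)+1$ elements.
   Context: The syntactic congruence of $R\subseteq A^*$ is $u\sim_R v$ iff for all $p,q\in A^*$, $puq\in R\Leftrightarrow pvq\in R$; the syntactic monoid of $R$ is $A^*/{\sim_R}$. *)

theory Defs
  imports Main
begin

definition syntactic_congruence :: "'a set \<Rightarrow> 'a list set \<Rightarrow> ('a list \<times> 'a list) set" where
  "syntactic_congruence A R =
     {(u, v). u \<in> lists A \<and> v \<in> lists A \<and>
        (\<forall>p \<in> lists A. \<forall>q \<in> lists A. (p @ u @ q \<in> R) = (p @ v @ q \<in> R))}"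

definition syntactic_monoid :: "'a set \<Rightarrow> 'a list set \<Rightarrow> 'a list set set" where
  "syntactic_monoid A R = lists A // syntactic_congruence A R"

definition lang_concat_letter :: "'a list set \<Rightarrow> 'a \<Rightarrow> 'a list set \<Rightarrow> 'a list set" where
  "lang_concat_letter K a L = {u @ [a] @ v | u v. u \<in> K \<and> v \<in> L}"

end

theory Submission
  imports Defs
begin

text \<open>Over the alphabet \<open>{a, b, c}\<close> take for \<open>K\<close> the words whose number of \<open>b\<close>'s is divisible
  by \<open>m\<close> and for \<open>L\<close> those whose number of \<open>c\<close>'s is divisible by \<open>n\<close>; their syntactic monoids
  are the cyclic groups of orders \<open>m\<close> and \<open>n\<close>. The class of a word \<open>w\<close> modulo \<open>KaL\<close> is determined
  by its two counters and by the set of counter pairs \<open>(|u|\<^sub>b mod m, |v|\<^sub>c mod n)\<close> over all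
  factorisations \<open>w = uav\<close>; all words whose set is full are identified (they form a zero).
  Conversely, suitable contexts separate any two words with different data, and every triple
  with a proper subset is attained, which gives \<open>mn(2\<^sup>m\<^sup>n - 1)\<close> classes plus the zero.\<close>

subsection \<open>Additive inverses modulo \<open>m\<close>\<close>

definition minus_mod :: "nat \<Rightarrow> nat \<Rightarrow> nat" where
  "minus_mod m r = (m - r mod m) mod m"

lemma minus_mod_less: "0 < m \<Longrightarrow> minus_mod m r < m"
  unfolding minus_mod_def by simp

lemma add_minus_mod:
  assumes "0 < m"
  shows "(r + minus_mod m r) mod m = 0"
proof -
  have "(r + minus_mod m r) mod m = (r mod m + (m - r mod m)) mod m"
    unfolding minus_mod_def by (simp add: mod_simps)
  also have "r mod m + (m - r mod m) = m" using assms by simp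
  finally show ?thesis by simp
qed

lemma minus_mod_add: "0 < m \<Longrightarrow> (minus_mod m r + r) mod m = 0"
  using add_minus_mod[of m r] by (simp only: add.commute)

lemma minus_mod_mod [simp]: "minus_mod m (r mod m) = minus_mod m r"
  unfolding minus_mod_def by simp

lemma add_mod_eq_iff:
  assumes "x < m" "z < m"
  shows "(r + x) mod m = z \<longleftrightarrow> x = (z + minus_mod m r) mod m"
proof
  have pos: "0 < m" using assms(1) by simp
  assume "(r + x) mod m = z"
  then have "(z + minus_mod m r) mod m = (r + x + minus_mod m r) mod m"
    using mod_add_left_eq by blast
  also have "\<dots> = (x + (r + minus_mod m r) mod m) mod m"
    by (simp add: mod_add_right_eq ac_simps)
  also have "\<dots> = x" using add_minus_mod[OF pos] assms(1) by simp
  finally show "x = (z + minus_mod m r) mod m" ..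
next
  have pos: "0 < m" using assms(1) by simp
  assume "x = (z + minus_mod m r) mod m"
  then have "(r + x) mod m = (r + (z + minus_mod m r)) mod m"
    using mod_add_right_eq by blast
  also have "\<dots> = (z + (r + minus_mod m r) mod m) mod m"
    by (simp add: mod_add_right_eq ac_simps)
  also have "\<dots> = z" using add_minus_mod[OF pos] assms(2) by simp
  finally show "(r + x) mod m = z" .
qed

lemma add_mod_left_cancel:
  assumes "x < (m::nat)" "y < m"
  shows "(r + x) mod m = (r + y) mod m \<longleftrightarrow> x = y"
  using add_mod_eq_iff[OF assms(1), of "(r + y) mod m" r] add_mod_eq_iff[OF assms(2), of "(r + y) mod m" r]
    assms by auto

lemma minus_mod_minus_mod:
  assumes "0 < m"
  shows "minus_mod m (minus_mod m r) = r mod m"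
proof -
  have "(minus_mod m r + r mod m) mod m = 0"
    using minus_mod_add[OF assms, of r] by (simp add: mod_add_right_eq)
  then show ?thesis
    using add_mod_eq_iff[of "r mod m" m 0 "minus_mod m r"] assms by (simp add: minus_mod_less)
qed

lemma minus_mod_eq_iff:
  assumes "0 < m"
  shows "minus_mod m r = minus_mod m s \<longleftrightarrow> r mod m = s mod m"
proof
  assume "minus_mod m r = minus_mod m s"
  then have "minus_mod m (minus_mod m r) = minus_mod m (minus_mod m s)" by simp
  then show "r mod m = s mod m" by (simp add: minus_mod_minus_mod[OF assms])
qed (simp add: minus_mod_def)

subsection \<open>Letter counts modulo \<open>m\<close>\<close>

lemma count_list_replicate: "count_list (replicate k x) y = (if x = y then k else 0)"
  by (induction k) auto

definition count_mod :: "'a \<Rightarrow> nat \<Rightarrow> 'a list \<Rightarrow> nat" where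
  "count_mod c m w = count_list w c mod m"

lemma count_mod_less: "0 < m \<Longrightarrow> count_mod c m w < m"
  unfolding count_mod_def by simp

lemma count_mod_mod [simp]: "count_mod c m w mod m = count_mod c m w"
  unfolding count_mod_def by simp

lemma count_mod_append: "count_mod c m (u @ v) = (count_mod c m u + count_mod c m v) mod m"
  unfolding count_mod_def by (simp add: mod_add_eq)

lemma count_mod_Nil [simp]: "count_mod c m [] = 0"
  unfolding count_mod_def by simp

lemma count_mod_Cons_other [simp]: "x \<noteq> c \<Longrightarrow> count_mod c m (x # w) = count_mod c m w"
  unfolding count_mod_def by simp

lemma count_mod_replicate [simp]:
  "count_mod c m (replicate k x) = (if x = c then k mod m else 0)"
  unfolding count_mod_def by (simp add: count_list_replicate)

lemma count_mod_image:
  assumes "0 < m" "c \<in> A"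
  shows "count_mod c m ` lists A = {..<m}"
proof
  show "count_mod c m ` lists A \<subseteq> {..<m}" using count_mod_less[OF assms(1)] by auto
  show "{..<m} \<subseteq> count_mod c m ` lists A"
  proof
    fix x assume "x \<in> {..<m}"
    then have "count_mod c m (replicate x c) = x" by simp
    then show "x \<in> count_mod c m ` lists A"
      using assms(2) by (intro image_eqI[of x _ "replicate x c"]) auto
  qed
qed

definition count_divisible_lang :: "'a set \<Rightarrow> 'a \<Rightarrow> nat \<Rightarrow> 'a list set" where
  "count_divisible_lang A c m = {w \<in> lists A. count_mod c m w = 0}"

lemma syntactic_congruence_count_divisible_lang:
  assumes "0 < m" "c \<in> A" "u \<in> lists A" "v \<in> lists A"
  shows "(u, v) \<in> syntactic_congruence A (count_divisible_lang A c m)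
    \<longleftrightarrow> count_mod c m u = count_mod c m v"
proof
  let ?r = "minus_mod m (count_mod c m u)"
  assume "(u, v) \<in> syntactic_congruence A (count_divisible_lang A c m)"
  moreover have rep: "replicate ?r c \<in> lists A" using assms(2) by auto
  ultimately have "[] @ u @ replicate ?r c \<in> count_divisible_lang A c m
      \<longleftrightarrow> [] @ v @ replicate ?r c \<in> count_divisible_lang A c m"
    unfolding syntactic_congruence_def by blast
  then have "count_mod c m (u @ replicate ?r c) = 0 \<longleftrightarrow> count_mod c m (v @ replicate ?r c) = 0"
    using assms(3,4) rep by (simp add: count_divisible_lang_def)
  then have "(?r + count_mod c m v) mod m = 0"
    using add_minus_mod[OF assms(1), of "count_mod c m u"] minus_mod_less[OF assms(1)]
    by (simp add: count_mod_append add.commute)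
  moreover have "(?r + count_mod c m u) mod m = 0"
    using minus_mod_add[OF assms(1)] .
  ultimately show "count_mod c m u = count_mod c m v"
    using add_mod_left_cancel[OF count_mod_less count_mod_less, OF assms(1) assms(1)] by metis
next
  assume "count_mod c m u = count_mod c m v"
  then show "(u, v) \<in> syntactic_congruence A (count_divisible_lang A c m)"
    using assms(3,4)
    unfolding syntactic_congruence_def count_divisible_lang_def by (auto simp: count_mod_append)
qed

subsection \<open>Counting syntactic classes through a complete invariant\<close>

lemma bij_betw_syntactic_monoid:
  assumes "\<And>u v. u \<in> lists A \<Longrightarrow> v \<in> lists A \<Longrightarrow>
             (u, v) \<in> syntactic_congruence A R \<longleftrightarrow> f u = f v"
  shows "bij_betw (\<lambda>z. {w \<in> lists A. f w = z}) (f ` lists A) (syntactic_monoid A R)"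
proof (rule bij_betw_imageI)
  show "inj_on (\<lambda>z. {w \<in> lists A. f w = z}) (f ` lists A)"
  proof (rule inj_onI)
    fix z z' assume "z \<in> f ` lists A" and same: "{w \<in> lists A. f w = z} = {w \<in> lists A. f w = z'}"
    then obtain u where "u \<in> lists A" "f u = z" by blast
    then show "z = z'" using same by blast
  qed
  have words: "(u, w) \<in> syntactic_congruence A R \<Longrightarrow> w \<in> lists A" for u w
    by (simp add: syntactic_congruence_def)
  have "syntactic_congruence A R `` {u} = {w \<in> lists A. f w = f u}" if "u \<in> lists A" for u
  proof (rule set_eqI)
    fix w
    show "w \<in> syntactic_congruence A R `` {u} \<longleftrightarrow> w \<in> {w \<in> lists A. f w = f u}"
      unfolding Image_singleton_iff mem_Collect_eq using assms[OF that, of w] words[of u w] by metis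
  qed
  then show "(\<lambda>z. {w \<in> lists A. f w = z}) ` f ` lists A = syntactic_monoid A R"
    unfolding syntactic_monoid_def quotient_def by auto
qed

lemma syntactic_monoid_count_divisible_lang:
  assumes "0 < m" "c \<in> A"
  shows "finite (syntactic_monoid A (count_divisible_lang A c m))"
    and "card (syntactic_monoid A (count_divisible_lang A c m)) = m"
proof -
  have bij: "bij_betw (\<lambda>z. {w \<in> lists A. count_mod c m w = z}) {..<m}
      (syntactic_monoid A (count_divisible_lang A c m))"
    using bij_betw_syntactic_monoid[of A "count_divisible_lang A c m" "count_mod c m"]
      syntactic_congruence_count_divisible_lang[OF assms] count_mod_image[OF assms] by simp
  show "finite (syntactic_monoid A (count_divisible_lang A c m))"
    using bij_betw_finite[OF bij] by simp
  show "card (syntactic_monoid A (count_divisible_lang A c m)) = m"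
    using bij_betw_same_card[OF bij] by simp
qed

subsection \<open>Factorisations at the marker letter\<close>

lemma append_eq_append_Cons_conv:
  "x @ y = u @ a # v \<longleftrightarrow> (\<exists>v'. x = u @ a # v' \<and> v = v' @ y) \<or> (\<exists>u'. u = x @ u' \<and> y = u' @ a # v)"
  by (auto simp: append_eq_append_conv2 append_eq_Cons_conv)

locale marked_product =
  fixes a b c :: 'a and m n :: nat
  assumes distinct_letters: "distinct [a, b, c]"
    and m_pos: "0 < m" and n_pos: "0 < n"
begin

lemma letters_neq [simp]: "a \<noteq> b" "b \<noteq> a" "a \<noteq> c" "c \<noteq> a" "b \<noteq> c" "c \<noteq> b"
  using distinct_letters by auto

abbreviation alphabet :: "'a set" where "alphabet \<equiv> {a, b, c}"
abbreviation K :: "'a list set" where "K \<equiv> count_divisible_lang alphabet b m"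
abbreviation L :: "'a list set" where "L \<equiv> count_divisible_lang alphabet c n"
abbreviation bcount :: "'a list \<Rightarrow> nat" where "bcount \<equiv> count_mod b m"
abbreviation ccount :: "'a list \<Rightarrow> nat" where "ccount \<equiv> count_mod c n"
abbreviation grid :: "(nat \<times> nat) set" where "grid \<equiv> {..<m} \<times> {..<n}"

definition cuts :: "'a list \<Rightarrow> (nat \<times> nat) set" where
  "cuts w = {(bcount u, ccount v) | u v. w = u @ a # v}"

lemma mem_cutsI: "w = u @ a # v \<Longrightarrow> (bcount u, ccount v) \<in> cuts w"
  unfolding cuts_def by blast

lemma mem_cutsE:
  assumes "z \<in> cuts w"
  obtains u v where "w = u @ a # v" "z = (bcount u, ccount v)"
  using assms unfolding cuts_def by blast

lemma cuts_subset_grid: "cuts w \<subseteq> grid"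
  unfolding cuts_def using count_mod_less m_pos n_pos by auto

lemma cuts_eq_empty: "a \<notin> set w \<Longrightarrow> cuts w = {}"
  unfolding cuts_def by auto

lemma cuts_append:
  "cuts (x @ y) = (\<lambda>(i, j). (i, (j + ccount y) mod n)) ` cuts x
     \<union> (\<lambda>(i, j). ((bcount x + i) mod m, j)) ` cuts y"
    (is "_ = ?left \<union> ?right")
proof (intro equalityI subsetI)
  fix z assume "z \<in> cuts (x @ y)"
  then obtain u v where z: "z = (bcount u, ccount v)" and split: "x @ y = u @ a # v"
    by (blast elim: mem_cutsE)
  from split consider (left) v' where "x = u @ a # v'" "v = v' @ y"
    | (right) u' where "u = x @ u'" "y = u' @ a # v"
    unfolding append_eq_append_Cons_conv by blast
  then show "z \<in> ?left \<union> ?right"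
  proof cases
    case left
    have "z \<in> ?left"
      by (rule rev_image_eqI[OF mem_cutsI[OF left(1)]]) (simp add: z left count_mod_append)
    then show ?thesis ..
  next
    case right
    have "z \<in> ?right"
      by (rule rev_image_eqI[OF mem_cutsI[OF right(2)]]) (simp add: z right count_mod_append)
    then show ?thesis ..
  qed
next
  fix z assume "z \<in> ?left \<union> ?right"
  then show "z \<in> cuts (x @ y)"
  proof
    assume "z \<in> ?left"
    then obtain u v where "x = u @ a # v" "z = (bcount u, (ccount v + ccount y) mod n)"
      by (auto elim: mem_cutsE)
    then show ?thesis using mem_cutsI[of "x @ y" u "v @ y"] by (simp add: count_mod_append)
  next
    assume "z \<in> ?right"
    then obtain u v where "y = u @ a # v" "z = ((bcount x + bcount u) mod m, ccount v)"
      by (auto elim: mem_cutsE)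
    then show ?thesis using mem_cutsI[of "x @ y" "x @ u" v] by (simp add: count_mod_append)
  qed
qed

lemma cuts_single_marker:
  assumes "a \<notin> set u" "a \<notin> set v"
  shows "cuts (u @ a # v) = {(bcount u, ccount v)}"
proof -
  have "cuts [a] = {(0, 0)}"
    unfolding cuts_def by (auto simp: Cons_eq_append_conv)
  then show ?thesis
    using cuts_append[of "u @ [a]" v] cuts_append[of u "[a]"] assms by (simp add: cuts_eq_empty)
qed

lemma mem_cuts_append:
  assumes "i < m" "j < n"
  shows "(i, j) \<in> cuts (x @ y) \<longleftrightarrow>
    (i, (j + minus_mod n (ccount y)) mod n) \<in> cuts x \<or> ((i + minus_mod m (bcount x)) mod m, j) \<in> cuts y"
proof -
  let ?j = "(j + minus_mod n (ccount y)) mod n" and ?i = "(i + minus_mod m (bcount x)) mod m"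
  have j_iff: "(j' + ccount y) mod n = j \<longleftrightarrow> j' = ?j" if "j' < n" for j'
    using add_mod_eq_iff[OF that assms(2), of "ccount y"] by (simp only: add.commute)
  have i_iff: "(bcount x + i') mod m = i \<longleftrightarrow> i' = ?i" if "i' < m" for i'
    using add_mod_eq_iff[OF that assms(1)] .
  have "(i, j) \<in> (\<lambda>(i, j). (i, (j + ccount y) mod n)) ` cuts x \<longleftrightarrow> (i, ?j) \<in> cuts x"
  proof
    assume "(i, j) \<in> (\<lambda>(i, j). (i, (j + ccount y) mod n)) ` cuts x"
    then obtain j' where "(i, j') \<in> cuts x" "(j' + ccount y) mod n = j" by auto
    moreover from this have "j' < n" using cuts_subset_grid by blast
    ultimately show "(i, ?j) \<in> cuts x" using j_iff by simp
  next
    assume "(i, ?j) \<in> cuts x"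
    moreover have "(?j + ccount y) mod n = j" using j_iff n_pos by simp
    ultimately show "(i, j) \<in> (\<lambda>(i, j). (i, (j + ccount y) mod n)) ` cuts x"
      by (force intro: rev_image_eqI)
  qed
  moreover have "(i, j) \<in> (\<lambda>(i, j). ((bcount x + i) mod m, j)) ` cuts y \<longleftrightarrow> (?i, j) \<in> cuts y"
  proof
    assume "(i, j) \<in> (\<lambda>(i, j). ((bcount x + i) mod m, j)) ` cuts y"
    then obtain i' where "(i', j) \<in> cuts y" "(bcount x + i') mod m = i" by auto
    moreover from this have "i' < m" using cuts_subset_grid by blast
    ultimately show "(?i, j) \<in> cuts y" using i_iff by simp
  next
    assume "(?i, j) \<in> cuts y"
    moreover have "(bcount x + ?i) mod m = i" using i_iff m_pos by simp
    ultimately show "(i, j) \<in> (\<lambda>(i, j). ((bcount x + i) mod m, j)) ` cuts y"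
      by (force intro: rev_image_eqI)
  qed
  ultimately show ?thesis unfolding cuts_append by blast
qed

lemma zero_in_cuts_context:
  "(0, 0) \<in> cuts (p @ w @ q) \<longleftrightarrow>
     (0, minus_mod n (ccount (w @ q))) \<in> cuts p
     \<or> (minus_mod m (bcount p), minus_mod n (ccount q)) \<in> cuts w
     \<or> ((minus_mod m (bcount p) + minus_mod m (bcount w)) mod m, 0) \<in> cuts q"
  using mem_cuts_append[of 0 0 p "w @ q"] mem_cuts_append[of "minus_mod m (bcount p)" 0 w q]
    m_pos n_pos by (simp add: minus_mod_less)

lemma context_detects_cut:
  assumes "i < m" "j < n"
  defines "p \<equiv> replicate (minus_mod m i) b" and "q \<equiv> replicate (minus_mod n j) c"
  shows "(0, 0) \<in> cuts (p @ w @ q) \<longleftrightarrow> (i, j) \<in> cuts w"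
  unfolding zero_in_cuts_context using assms m_pos n_pos
  by (simp add: cuts_eq_empty minus_mod_less minus_mod_minus_mod)

lemma context_detects_bcount:
  assumes "i < m" "j < n" "(i, j) \<notin> cuts w" "x < m"
  defines "p \<equiv> replicate (minus_mod m i) b"
    and "q \<equiv> replicate (minus_mod n j) c @ replicate (i + minus_mod m x) b @ [a]"
  shows "(0, 0) \<in> cuts (p @ w @ q) \<longleftrightarrow> bcount w = x"
proof -
  have "cuts q = {((i + minus_mod m x) mod m, 0)}"
    using cuts_single_marker[of "replicate (minus_mod n j) c @ replicate (i + minus_mod m x) b" "[]"]
    by (simp add: q_def count_mod_append)
  moreover have "(i + minus_mod m (bcount w)) mod m = (i + minus_mod m x) mod m \<longleftrightarrow> bcount w = x"
    using add_mod_left_cancel[OF minus_mod_less minus_mod_less, OF m_pos m_pos] minus_mod_eq_iff[OF m_pos]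
      count_mod_less[OF m_pos] assms(4) by simp
  ultimately show ?thesis
    unfolding zero_in_cuts_context using assms m_pos n_pos
    by (simp add: cuts_eq_empty minus_mod_less minus_mod_minus_mod count_mod_append)
qed

lemma context_detects_ccount:
  assumes "i < m" "j < n" "(i, j) \<notin> cuts w" "y < n"
  defines "p \<equiv> a # replicate (minus_mod n (y + minus_mod n j)) c @ replicate (minus_mod m i) b"
    and "q \<equiv> replicate (minus_mod n j) c"
  shows "(0, 0) \<in> cuts (p @ w @ q) \<longleftrightarrow> ccount w = y"
proof -
  have "cuts p = {(0, minus_mod n (y + minus_mod n j))}"
    using cuts_single_marker[of "[]" "replicate (minus_mod n (y + minus_mod n j)) c @ replicate (minus_mod m i) b"]
      n_pos by (simp add: p_def count_mod_append minus_mod_less)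
  moreover have "minus_mod n (ccount w + minus_mod n j) = minus_mod n (y + minus_mod n j) \<longleftrightarrow> ccount w = y"
    using add_mod_left_cancel[OF count_mod_less assms(4), OF n_pos, of "minus_mod n j"]
      minus_mod_eq_iff[OF n_pos] by (simp add: add.commute)
  ultimately show ?thesis
    unfolding zero_in_cuts_context using assms m_pos n_pos
    by (simp add: cuts_eq_empty minus_mod_less minus_mod_minus_mod count_mod_append)
qed

lemma context_full_cuts:
  assumes "cuts w = grid"
  shows "(0, 0) \<in> cuts (p @ w @ q)"
  using assms m_pos n_pos by (simp add: zero_in_cuts_context minus_mod_less)

lemma mem_lang_concat_letter_iff:
  "w \<in> lang_concat_letter K a L \<longleftrightarrow> w \<in> lists alphabet \<and> (0, 0) \<in> cuts w"
  unfolding lang_concat_letter_def count_divisible_lang_def cuts_def by fastforce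

text \<open>\<open>None\<close> is the zero of the syntactic monoid: a word whose cuts fill the grid lies in \<open>KaL\<close>
  in every context.\<close>

definition kal_class :: "'a list \<Rightarrow> (nat \<times> nat \<times> (nat \<times> nat) set) option" where
  "kal_class w = (if cuts w = grid then None else Some (bcount w, ccount w, cuts w))"

lemma syntactic_congruence_concat:
  assumes "u \<in> lists alphabet" "v \<in> lists alphabet"
  shows "(u, v) \<in> syntactic_congruence alphabet (lang_concat_letter K a L) \<longleftrightarrow> kal_class u = kal_class v"
    (is "?congruent \<longleftrightarrow> _")
proof -
  have congruent_iff: "?congruent \<longleftrightarrow> (\<forall>p \<in> lists alphabet. \<forall>q \<in> lists alphabet.
      (0, 0) \<in> cuts (p @ u @ q) \<longleftrightarrow> (0, 0) \<in> cuts (p @ v @ q))"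
    using assms by (auto simp: syntactic_congruence_def mem_lang_concat_letter_iff)
  show ?thesis
  proof
    assume ?congruent
    then have same: "(0, 0) \<in> cuts (p @ u @ q) \<longleftrightarrow> (0, 0) \<in> cuts (p @ v @ q)"
      if "p \<in> lists alphabet" "q \<in> lists alphabet" for p q
      using congruent_iff that by blast
    have cuts_eq: "cuts u = cuts v"
    proof (rule set_eqI)
      fix z :: "nat \<times> nat"
      obtain i j where z: "z = (i, j)" by force
      show "z \<in> cuts u \<longleftrightarrow> z \<in> cuts v"
      proof (cases "i < m \<and> j < n")
        case True
        then have ij: "i < m" "j < n" by auto
        have "replicate (minus_mod m i) b \<in> lists alphabet" "replicate (minus_mod n j) c \<in> lists alphabet"
          by auto
        from same[OF this] show ?thesis unfolding z by (simp only: context_detects_cut[OF ij])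
      qed (use cuts_subset_grid[of u] cuts_subset_grid[of v] z in auto)
    qed
    show "kal_class u = kal_class v"
    proof (cases "cuts u = grid")
      case False
      then obtain i j where ij: "i < m" "j < n" "(i, j) \<notin> cuts u"
        using cuts_subset_grid by auto
      then have ij': "(i, j) \<notin> cuts v" using cuts_eq by simp
      have "bcount u = bcount v"
      proof -
        let ?x = "bcount u"
        have "replicate (minus_mod m i) b \<in> lists alphabet"
          "replicate (minus_mod n j) c @ replicate (i + minus_mod m ?x) b @ [a] \<in> lists alphabet"
          by auto
        from same[OF this] show ?thesis
          by (simp only: context_detects_bcount[OF ij count_mod_less[OF m_pos]]
              context_detects_bcount[OF ij(1,2) ij' count_mod_less[OF m_pos]]) simp
      qed
      moreover have "ccount u = ccount v"
      proof -
        let ?y = "ccount u"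
        have "a # replicate (minus_mod n (?y + minus_mod n j)) c @ replicate (minus_mod m i) b \<in> lists alphabet"
          "replicate (minus_mod n j) c \<in> lists alphabet"
          by auto
        from same[OF this] show ?thesis
          by (simp only: context_detects_ccount[OF ij count_mod_less[OF n_pos]]
              context_detects_ccount[OF ij(1,2) ij' count_mod_less[OF n_pos]]) simp
      qed
      ultimately show ?thesis unfolding kal_class_def using cuts_eq by simp
    qed (simp add: kal_class_def cuts_eq)
  next
    assume same_class: "kal_class u = kal_class v"
    have "(0, 0) \<in> cuts (p @ u @ q) \<longleftrightarrow> (0, 0) \<in> cuts (p @ v @ q)" for p q
    proof (cases "cuts u = grid")
      case True
      then have "cuts v = grid" using same_class by (auto simp: kal_class_def split: if_splits)
      then show ?thesis using True context_full_cuts by blast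
    next
      case False
      then have "bcount u = bcount v" "ccount u = ccount v" "cuts u = cuts v"
        using same_class by (auto simp: kal_class_def split: if_splits)
      then show ?thesis by (simp add: zero_in_cuts_context count_mod_append)
    qed
    then show ?congruent using congruent_iff by blast
  qed
qed

lemma exists_word_with_invariants:
  assumes "P \<subseteq> grid" "x < m" "y < n"
  shows "\<exists>w \<in> lists alphabet. bcount w = x \<and> ccount w = y \<and> cuts w = P"
proof -
  have "finite P" using assms(1) finite_subset by blast
  then show ?thesis using assms
  proof (induction P arbitrary: x y rule: finite_induct)
    case empty
    show ?case
      by (rule bexI[of _ "replicate x b @ replicate y c"])
        (use empty.prems in \<open>auto simp: count_mod_append cuts_eq_empty\<close>)
  next
    case (insert ij P)
    obtain i j where ij: "ij = (i, j)" "i < m" "j < n" using insert.prems(1) by auto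
    obtain w where w: "w \<in> lists alphabet" "bcount w = x" "ccount w = y" "cuts w = P"
      using insert by blast
    define t where "t = j + minus_mod n y"
    define g where
      "g = replicate i b @ replicate (minus_mod n t) c @ a # replicate (minus_mod m i) b @ replicate t c"
    \<comment> \<open>\<open>g\<close> has trivial counters and a single cut, which lands on \<open>(i, j)\<close> once followed by \<open>w\<close>.\<close>
    have "bcount g = 0"
      using add_minus_mod[OF m_pos, of i] ij(2) by (simp add: g_def count_mod_append mod_add_right_eq)
    moreover have "ccount g = 0"
      using minus_mod_add[OF n_pos, of t] by (simp add: g_def count_mod_append mod_simps add.commute)
    moreover have "cuts g = {(i, t mod n)}"
      using cuts_single_marker[of "replicate i b @ replicate (minus_mod n t) c"] ij(2)
      by (simp add: g_def count_mod_append)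
    moreover have "(t mod n + y) mod n = j"
    proof -
      have "(t mod n + y) mod n = (j + (minus_mod n y + y) mod n) mod n"
        unfolding t_def by (simp add: mod_simps ac_simps)
      then show ?thesis using minus_mod_add[OF n_pos, of y] ij(3) by simp
    qed
    moreover have "(\<lambda>(i, j). (i mod m, j)) ` P = P"
      using insert.prems(1) by (force simp: image_iff)
    ultimately have "bcount (g @ w) = x" "ccount (g @ w) = y" "cuts (g @ w) = insert ij P"
      using w insert.prems ij(1) by (simp_all add: count_mod_append cuts_append)
    moreover have "g @ w \<in> lists alphabet" using w(1) by (auto simp: g_def)
    ultimately show ?case by blast
  qed
qed

lemma kal_class_image:
  "kal_class ` lists alphabet = insert None (Some ` ({..<m} \<times> {..<n} \<times> (Pow grid - {grid})))"
proof (rule set_eqI)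
  fix z
  show "z \<in> kal_class ` lists alphabet \<longleftrightarrow> z \<in> insert None (Some ` ({..<m} \<times> {..<n} \<times> (Pow grid - {grid})))"
  proof
    assume "z \<in> kal_class ` lists alphabet"
    then obtain w where z: "z = kal_class w" by blast
    show "z \<in> insert None (Some ` ({..<m} \<times> {..<n} \<times> (Pow grid - {grid})))"
      using cuts_subset_grid[of w] count_mod_less[OF m_pos, of b w] count_mod_less[OF n_pos, of c w]
      by (auto simp: z kal_class_def)
  next
    assume z: "z \<in> insert None (Some ` ({..<m} \<times> {..<n} \<times> (Pow grid - {grid})))"
    show "z \<in> kal_class ` lists alphabet"
    proof (cases z)
      case None
      obtain w where "w \<in> lists alphabet" "cuts w = grid"
        using exists_word_with_invariants[of grid 0 0] m_pos n_pos by blast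
      then show ?thesis using None by (force simp: kal_class_def)
    next
      case (Some d)
      then obtain x y P where "z = Some (x, y, P)" "x < m" "y < n" "P \<subseteq> grid" "P \<noteq> grid"
        using z by auto
      moreover obtain w where "w \<in> lists alphabet" "bcount w = x" "ccount w = y" "cuts w = P"
        using exists_word_with_invariants calculation by blast
      ultimately show ?thesis by (force simp: kal_class_def)
    qed
  qed
qed

lemma syntactic_monoid_concat:
  shows "finite (syntactic_monoid alphabet (lang_concat_letter K a L))"
    and "card (syntactic_monoid alphabet (lang_concat_letter K a L)) = m * n * (2 ^ (m * n) - 1) + 1"
proof -
  let ?X = "{..<m} \<times> {..<n} \<times> (Pow grid - {grid})"
  have bij: "bij_betw (\<lambda>z. {w \<in> lists alphabet. kal_class w = z}) (insert None (Some ` ?X))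
      (syntactic_monoid alphabet (lang_concat_letter K a L))"
    using bij_betw_syntactic_monoid[of alphabet "lang_concat_letter K a L" kal_class]
      syntactic_congruence_concat kal_class_image by simp
  have "card (Pow grid - {grid}) = 2 ^ (m * n) - 1"
    by (simp add: card_Pow card_cartesian_product card_Diff_singleton)
  then have "card (insert None (Some ` ?X)) = m * n * (2 ^ (m * n) - 1) + 1"
    by (simp add: card_image card_cartesian_product)
  then show "card (syntactic_monoid alphabet (lang_concat_letter K a L)) = m * n * (2 ^ (m * n) - 1) + 1"
    using bij_betw_same_card[OF bij] by simp
  show "finite (syntactic_monoid alphabet (lang_concat_letter K a L))"
    using bij_betw_finite[OF bij] by simp
qed

end

theorem proposition5:
  fixes m n :: nat
  assumes "m > 0" and "n > 0"
  shows "\<exists>(A :: nat set) a K L. finite A \<and> a \<in> A \<and> K \<subseteq> lists A \<and> L \<subseteq> lists A \<and>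
           finite (syntactic_monoid A K) \<and> card (syntactic_monoid A K) = m \<and>
           finite (syntactic_monoid A L) \<and> card (syntactic_monoid A L) = n \<and>
           finite (syntactic_monoid A (lang_concat_letter K a L)) \<and>
           card (syntactic_monoid A (lang_concat_letter K a L)) = m * n * (2 ^ (m * n) - 1) + 1"
proof -
  interpret marked_product "0 :: nat" 1 2 m n
    by unfold_locales (use assms in simp_all)
  show ?thesis
    using syntactic_monoid_count_divisible_lang[OF assms(1), of 1 alphabet]
      syntactic_monoid_count_divisible_lang[OF assms(2), of 2 alphabet]
      syntactic_monoid_concat
    by (intro exI[of _ alphabet] exI[of _ 0] exI[of _ K] exI[of _ L]) (auto simp: count_divisible_lang_def)
qed

end
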